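(* Let $(\lambda,f)$ be a flagged strict partition of length $r$, and assume that if $r\ge2$ then $\lambda_{r-1}>f_{r-1}$ or $\lambda_r>f_r$. Write $\bar\lambda_i=\lambda_i+i-1$ and, for a strict partition $\mu\subset\lambda$ (padded by zeros to length $r$), $\bar\mu_i=\mu_i+i-1$ ($1\le i\le r$). Then \[ Q_{\lambda,f}(x;z|b)=\sum_{\substack{\mu\text{ strict},\ \mu\subset\lambda\\ \bar\mu\text{ a partition}}}Q_\mu(x|b)\cdot\widetilde s_{\bar\lambda/\bar\mu,f}(z|\mathbf b)^{\star}, \] where $\star$ denotes the substitution $b_{-i}\mapsto -b_{i+1}$ for all $i\ge0$.
   Context: Shifted diagram of a strict partition $\lambda$ of length $r$: boxes $(i,j)$, $1\le i\le r$, $i\le j\le i+\lambda_i-1$. Alphabet $\mathbf P$: $1'<1<2'<2<\cdots<1^\circ<2^\circ<\cdots$. A marked shifted tableau of $(\lambda,f)$, $f\in\mathbb{Z}_{\ge0}^r$, is a filling of the shifted diagram by $\mathbf P$ with: (1) weak increase along rows and columns; (2) unmarked numbers strictly increasing down columns; (3) primed numbers strictly increasing along rows; (4) circled numbers strictly increasing along rows; (5) entries of row $i$ at most $f_i^\circ$. With $b_{-m}:=-b_{m+1}$ ($m\ge0$), the weight is $(xz|b)^T=\prod_{\text{unmarked }k\text{ in }(i,j)}(x_k+b_{j-i})\prod_{\text{primed }k'\text{ in }(i,j)}(x_k-b_{j-i})\prod_{\text{circled }k^\circ\text{ in }(i,j)}(z_k+b_{k+i-j})$ and $Q_{\lambda,f}(x;z|b)=\sum_T(xz|b)^T$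 over all such $T$; $Q_\mu(x|b)=Q_{\mu,(0,\dots,0)}(x;z|b)$ (Ivanov's factorial $Q$-function; $Q_\varnothing=1$). Row-strict flagged skew factorial Schur polynomials: let $\mathbf b=(b_i)_{i\in\mathbb{Z}}$ be independent variables. For partitions $\mu\subset\lambda$ with at most $r$ parts (skew diagram: boxes $(i,j)$ with $\mu_i<j\le\lambda_i$) and $f\in\mathbb{Z}_{\ge0}^r$, a row-strict tableau of $(\lambda/\mu,f)$ fills each box with a positive integer so that numbers strictly increase along rows, weakly increase down columns, and entries in row $i$ are $\le f_i$. Then $\widetilde s_{\lambda/\mu,f}(z|\mathbf b)=\sum_T\prod_{\text{entry }e\text{ in box }(i,j)}(z_e+b_{e+i-j})$ (no relation imposed among the $b_i$). *)

theory Defs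
  imports Main
begin

text \<open>Letters of the alphabet P: primed k', unmarked k, circled k (k >= 1).\<close>
datatype letter = LPr nat | LUn nat | LCi nat

text \<open>Order 1' < 1 < 2' < 2 < ... < 1circ < 2circ < ... via a lexicographic key.\<close>
fun lkey :: "letter \<Rightarrow> nat \<times> nat" where
  "lkey (LPr k) = (0, 2 * k)"
| "lkey (LUn k) = (0, 2 * k + 1)"
| "lkey (LCi k) = (1, k)"

definition lle :: "letter \<Rightarrow> letter \<Rightarrow> bool" where
  "lle a c \<longleftrightarrow> fst (lkey a) < fst (lkey c) \<or>
      (fst (lkey a) = fst (lkey c) \<and> snd (lkey a) \<le> snd (lkey c))"

definition strict_partition :: "nat list \<Rightarrow> bool" where
  "strict_partition l \<longleftrightarrow> sorted_wrt (>) l \<and> (\<forall>x\<in>set l. 0 < x)"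

definition shdiag :: "nat list \<Rightarrow> (nat \<times> nat) set" where
  "shdiag lam = {(i, j). 1 \<le> i \<and> i \<le> length lam \<and> i \<le> j \<and> j < i + lam ! (i - 1)}"

text \<open>Extension of b to all integers with b_{-m} = - b_{m+1} (m >= 0); only b_1, b_2, ... are used.\<close>
definition bext :: "(int \<Rightarrow> 'a::comm_ring_1) \<Rightarrow> int \<Rightarrow> 'a" where
  "bext b t = (if 1 \<le> t then b t else - b (1 - t))"

definition marked_tableau :: "nat list \<Rightarrow> nat list \<Rightarrow> nat \<Rightarrow> (nat \<times> nat \<Rightarrow> letter) \<Rightarrow> bool" where
  "marked_tableau lam f n T \<longleftrightarrow>
     (\<forall>p. p \<notin> shdiag lam \<longrightarrow> T p = LUn 0) \<and>
     (\<forall>p\<in>shdiag lam. (\<forall>k. T p = LPr k \<longrightarrow> 1 \<le> k \<and> k \<le> n) \<and>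
                      (\<forall>k. T p = LUn k \<longrightarrow> 1 \<le> k \<and> k \<le> n) \<and>
                      (\<forall>k. T p = LCi k \<longrightarrow> 1 \<le> k)) \<and>
     (\<forall>i j j'. (i, j) \<in> shdiag lam \<and> (i, j') \<in> shdiag lam \<and> j < j' \<longrightarrow>
        lle (T (i, j)) (T (i, j'))) \<and>
     (\<forall>i i' j. (i, j) \<in> shdiag lam \<and> (i', j) \<in> shdiag lam \<and> i < i' \<longrightarrow>
        lle (T (i, j)) (T (i', j))) \<and>
     (\<forall>i i' j. (i, j) \<in> shdiag lam \<and> (i', j) \<in> shdiag lam \<and> i < i' \<and> T (i, j) = T (i', j) \<longrightarrow>
        (\<forall>k. T (i, j) \<noteq> LUn k)) \<and>
     (\<forall>i j j'. (i, j) \<in> shdiag lam \<and> (i, j') \<in> shdiag lam \<and> j < j' \<and> T (i, j) = T (i, j') \<longrightarrow>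
        (\<forall>k. T (i, j) \<noteq> LPr k \<and> T (i, j) \<noteq> LCi k)) \<and>
     (\<forall>i j. (i, j) \<in> shdiag lam \<longrightarrow> lle (T (i, j)) (LCi (f ! (i - 1))))"

fun lweight :: "(nat \<Rightarrow> 'a::comm_ring_1) \<Rightarrow> (nat \<Rightarrow> 'a) \<Rightarrow> (int \<Rightarrow> 'a) \<Rightarrow> nat \<Rightarrow> nat \<Rightarrow> letter \<Rightarrow> 'a" where
  "lweight x z B i j (LUn k) = x k + B (int j - int i)"
| "lweight x z B i j (LPr k) = x k - B (int j - int i)"
| "lweight x z B i j (LCi k) = z k + B (int k + int i - int j)"

definition Qlf :: "nat list \<Rightarrow> nat list \<Rightarrow> nat \<Rightarrow> (nat \<Rightarrow> 'a::comm_ring_1) \<Rightarrow> (nat \<Rightarrow> 'a)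
    \<Rightarrow> (int \<Rightarrow> 'a) \<Rightarrow> 'a" where
  "Qlf lam f n x z b =
     (\<Sum>T\<in>{T. marked_tableau lam f n T}.
        \<Prod>p\<in>shdiag lam. lweight x z (bext b) (fst p) (snd p) (T p))"

definition Qfac :: "nat list \<Rightarrow> nat \<Rightarrow> (nat \<Rightarrow> 'a::comm_ring_1) \<Rightarrow> (int \<Rightarrow> 'a) \<Rightarrow> 'a" where
  "Qfac mu n x b = Qlf mu (replicate (length mu) 0) n x (\<lambda>_. 0) b"

definition skdiag :: "nat list \<Rightarrow> nat list \<Rightarrow> (nat \<times> nat) set" where
  "skdiag la mu = {(i, j). 1 \<le> i \<and> i \<le> length la \<and> mu ! (i - 1) < j \<and> j \<le> la ! (i - 1)}"

definition rs_tableau :: "nat list \<Rightarrow> nat list \<Rightarrow> nat list \<Rightarrow> (nat \<times> nat \<Rightarrow> nat) \<Rightarrow> bool" where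
  "rs_tableau la mu f T \<longleftrightarrow>
     (\<forall>p. p \<notin> skdiag la mu \<longrightarrow> T p = 0) \<and>
     (\<forall>i j. (i, j) \<in> skdiag la mu \<longrightarrow> 1 \<le> T (i, j) \<and> T (i, j) \<le> f ! (i - 1)) \<and>
     (\<forall>i j j'. (i, j) \<in> skdiag la mu \<and> (i, j') \<in> skdiag la mu \<and> j < j' \<longrightarrow> T (i, j) < T (i, j')) \<and>
     (\<forall>i i' j. (i, j) \<in> skdiag la mu \<and> (i', j) \<in> skdiag la mu \<and> i < i' \<longrightarrow> T (i, j) \<le> T (i', j))"

text \<open>Row-strict flagged skew factorial Schur polynomial with independent variables c_i (i in Z).\<close>
definition sTilde :: "nat list \<Rightarrow> nat list \<Rightarrow> nat list \<Rightarrow> (nat \<Rightarrow> 'a::comm_ring_1) \<Rightarrow> (int \<Rightarrow> 'a) \<Rightarrow> 'a" where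
  "sTilde la mu f z c =
     (\<Sum>T\<in>{T. rs_tableau la mu f T}.
        \<Prod>p\<in>skdiag la mu. z (T p) + c (int (T p) + int (fst p) - int (snd p)))"

definition bar :: "nat list \<Rightarrow> nat list" where
  "bar l = map (\<lambda>i. l ! i + i) [0..<length l]"

end

theory Submission
  imports Defs
begin

text \<open>Circled letters exceed all primed and unmarked ones, so in a marked shifted tableau
  of \<open>(lam, f)\<close> the uncircled entries occupy a shifted subdiagram \<open>mu\<close> of \<open>lam\<close> and
  the circled ones fill the rest. The uncircled part is a tableau for \<open>Q_mu(x|b)\<close> (flag 0).
  In the coordinates of the shifted diagram the rest is exactly the skew diagram
  \<open>bar lam / bar mu\<close>, and the circled entries form a row-strict flagged tableau there whose
  weights are those of the flagged skew Schur polynomial with \<open>b\<^sub>-\<^sub>i = - b\<^sub>i\<^sub>+\<^sub>1\<close>.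
  Conversely, such a pair glues to a marked tableau exactly when the uncircled region is closed
  upwards and leftwards, i.e. when \<open>bar mu\<close> is a partition. Column monotonicity forces
  \<open>mu\<^sub>i\<^sub>+\<^sub>1 < mu\<^sub>i\<close>, except that rows could become entirely circled from some point on;
  the flag hypothesis on the last two rows rules this out, so \<open>mu\<close> is strict up to one trailing zero.
  The identity is then a reindexing of the tableau sum along this bijection.\<close>

fun circled :: "letter \<Rightarrow> bool" where
  "circled (LCi k) = True" | "circled (LPr k) = False" | "circled (LUn k) = False"

fun circ_index :: "letter \<Rightarrow> nat" where
  "circ_index (LCi k) = k" | "circ_index (LPr k) = 0" | "circ_index (LUn k) = 0"

fun letter_in_range :: "nat \<Rightarrow> letter \<Rightarrow> bool" where
  "letter_in_range n (LPr k) \<longleftrightarrow> 1 \<le> k \<and> k \<le> n"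
| "letter_in_range n (LUn k) \<longleftrightarrow> 1 \<le> k \<and> k \<le> n"
| "letter_in_range n (LCi k) \<longleftrightarrow> 1 \<le> k"

definition row_le :: "letter \<Rightarrow> letter \<Rightarrow> bool" where
  "row_le a c \<longleftrightarrow> lle a c \<and> (a = c \<longrightarrow> (\<exists>k. a = LUn k))"

definition col_le :: "letter \<Rightarrow> letter \<Rightarrow> bool" where
  "col_le a c \<longleftrightarrow> lle a c \<and> (a = c \<longrightarrow> (\<nexists>k. a = LUn k))"

lemma circled_iff: "circled a \<longleftrightarrow> a = LCi (circ_index a)"
  by (cases a) auto

lemma lle_circled: "lle a c \<Longrightarrow> circled a \<Longrightarrow> circled c"
  by (cases a; cases c) (auto simp: lle_def)

lemma lle_LCi_iff: "lle a (LCi k) \<longleftrightarrow> \<not> circled a \<or> circ_index a \<le> k"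
  by (cases a) (auto simp: lle_def)

lemma row_le_LCi_iff [simp]: "row_le (LCi k) (LCi k') \<longleftrightarrow> k < k'"
  by (auto simp: row_le_def lle_def)

lemma col_le_LCi_iff [simp]: "col_le (LCi k) (LCi k') \<longleftrightarrow> k \<le> k'"
  by (auto simp: col_le_def lle_def)

lemma row_le_LCi: "\<not> circled a \<Longrightarrow> row_le a (LCi k)"
  by (cases a) (auto simp: row_le_def lle_def)

lemma col_le_LCi: "\<not> circled a \<Longrightarrow> col_le a (LCi k)"
  by (cases a) (auto simp: col_le_def lle_def)

lemma marked_tableau_iff:
  "marked_tableau lam f n T \<longleftrightarrow>
     (\<forall>p. p \<notin> shdiag lam \<longrightarrow> T p = LUn 0) \<and>
     (\<forall>p\<in>shdiag lam. letter_in_range n (T p)) \<and>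
     (\<forall>i j j'. (i, j) \<in> shdiag lam \<and> (i, j') \<in> shdiag lam \<and> j < j' \<longrightarrow> row_le (T (i, j)) (T (i, j'))) \<and>
     (\<forall>i i' j. (i, j) \<in> shdiag lam \<and> (i', j) \<in> shdiag lam \<and> i < i' \<longrightarrow> col_le (T (i, j)) (T (i', j))) \<and>
     (\<forall>i j. (i, j) \<in> shdiag lam \<longrightarrow> lle (T (i, j)) (LCi (f ! (i - 1))))"
proof -
  have range: "letter_in_range n a \<longleftrightarrow>
      (\<forall>k. a = LPr k \<longrightarrow> 1 \<le> k \<and> k \<le> n) \<and> (\<forall>k. a = LUn k \<longrightarrow> 1 \<le> k \<and> k \<le> n) \<and>
      (\<forall>k. a = LCi k \<longrightarrow> 1 \<le> k)" for a
    by (cases a) auto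
  have unmarked: "(\<exists>k. a = LUn k) \<longleftrightarrow> (\<forall>k. a \<noteq> LPr k \<and> a \<noteq> LCi k)" for a
    by (cases a) auto
  have rows: "(\<forall>i j j'. P i j j' \<longrightarrow> lle (T (i, j)) (T (i, j'))) \<and>
      (\<forall>i j j'. P i j j' \<and> T (i, j) = T (i, j') \<longrightarrow> (\<forall>k. T (i, j) \<noteq> LPr k \<and> T (i, j) \<noteq> LCi k))
      \<longleftrightarrow> (\<forall>i j j'. P i j j' \<longrightarrow> row_le (T (i, j)) (T (i, j')))" for P
    unfolding row_le_def unmarked by blast
  have cols: "(\<forall>i i' j. P i i' j \<longrightarrow> lle (T (i, j)) (T (i', j))) \<and>
      (\<forall>i i' j. P i i' j \<and> T (i, j) = T (i', j) \<longrightarrow> (\<forall>k. T (i, j) \<noteq> LUn k))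
      \<longleftrightarrow> (\<forall>i i' j. P i i' j \<longrightarrow> col_le (T (i, j)) (T (i', j)))" for P
    unfolding col_le_def by blast
  show ?thesis
    unfolding marked_tableau_def range rows[symmetric] cols[symmetric] by (simp only: conj_ac)
qed

lemma marked_tableauD:
  assumes "marked_tableau lam f n T"
  shows marked_tableau_outside: "p \<notin> shdiag lam \<Longrightarrow> T p = LUn 0"
    and marked_tableau_range: "p \<in> shdiag lam \<Longrightarrow> letter_in_range n (T p)"
    and marked_tableau_row: "(i, j) \<in> shdiag lam \<Longrightarrow> (i, j') \<in> shdiag lam \<Longrightarrow> j < j' \<Longrightarrow>
      row_le (T (i, j)) (T (i, j'))"
    and marked_tableau_col: "(i, j) \<in> shdiag lam \<Longrightarrow> (i', j) \<in> shdiag lam \<Longrightarrow> i < i' \<Longrightarrow>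
      col_le (T (i, j)) (T (i', j))"
    and marked_tableau_flag: "(i, j) \<in> shdiag lam \<Longrightarrow> lle (T (i, j)) (LCi (f ! (i - 1)))"
  using assms unfolding marked_tableau_iff by blast+

lemma rs_tableauD:
  assumes "rs_tableau la mu f T"
  shows rs_tableau_outside: "p \<notin> skdiag la mu \<Longrightarrow> T p = 0"
    and rs_tableau_range: "(i, j) \<in> skdiag la mu \<Longrightarrow> 1 \<le> T (i, j) \<and> T (i, j) \<le> f ! (i - 1)"
    and rs_tableau_row: "(i, j) \<in> skdiag la mu \<Longrightarrow> (i, j') \<in> skdiag la mu \<Longrightarrow> j < j' \<Longrightarrow>
      T (i, j) < T (i, j')"
    and rs_tableau_col: "(i, j) \<in> skdiag la mu \<Longrightarrow> (i', j) \<in> skdiag la mu \<Longrightarrow> i < i' \<Longrightarrow>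
      T (i, j) \<le> T (i', j)"
  using assms unfolding rs_tableau_def by blast+

lemma zero_flag_tableau_uncircled:
  assumes "marked_tableau mu (replicate (length mu) 0) n T" "p \<in> shdiag mu"
  shows "\<not> circled (T p)"
proof
  assume circ: "circled (T p)"
  obtain i j where p: "p = (i, j)" and i: "1 \<le> i" "i \<le> length mu"
    using assms(2) by (cases p) (auto simp: shdiag_def)
  have "lle (T p) (LCi 0)"
    using marked_tableau_flag[OF assms(1) assms(2)[unfolded p]] i p by simp
  moreover have "letter_in_range n (T p)"
    using marked_tableau_range[OF assms] .
  ultimately show False
    using circ by (cases "T p") (auto simp: lle_def)
qed

lemma shdiag_iff: "(i, j) \<in> shdiag l \<longleftrightarrow> 1 \<le> i \<and> i \<le> length l \<and> i \<le> j \<and> j < i + l ! (i - 1)"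
  by (simp add: shdiag_def)

lemma skdiag_iff: "(i, j) \<in> skdiag la mu \<longleftrightarrow> 1 \<le> i \<and> i \<le> length la \<and> mu ! (i - 1) < j \<and> j \<le> la ! (i - 1)"
  by (simp add: skdiag_def)

lemma length_bar [simp]: "length (bar l) = length l"
  by (simp add: bar_def)

lemma nth_bar [simp]: "i < length l \<Longrightarrow> bar l ! i = l ! i + i"
  by (simp add: bar_def)

lemma shdiag_mono:
  assumes "length mu = length lam" "\<forall>i<length lam. mu ! i \<le> lam ! i"
  shows "shdiag mu \<subseteq> shdiag lam"
proof (rule subrelI)
  fix i j assume "(i, j) \<in> shdiag mu"
  moreover from this have "mu ! (i - 1) \<le> lam ! (i - 1)"
    using assms by (auto simp: shdiag_iff)
  ultimately show "(i, j) \<in> shdiag lam"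
    using assms by (auto simp: shdiag_iff)
qed

lemma skdiag_bar_eq_Diff:
  assumes "length mu = length lam" "\<forall>i<length lam. mu ! i \<le> lam ! i"
  shows "skdiag (bar lam) (bar mu) = shdiag lam - shdiag mu"
proof (intro equalityI subrelI)
  fix i j assume "(i, j) \<in> skdiag (bar lam) (bar mu)"
  then show "(i, j) \<in> shdiag lam - shdiag mu"
    using assms by (auto simp: skdiag_iff shdiag_iff)
next
  fix i j assume "(i, j) \<in> shdiag lam - shdiag mu"
  then show "(i, j) \<in> skdiag (bar lam) (bar mu)"
    using assms by (auto simp: skdiag_iff shdiag_iff)
qed

lemma shdiag_down_closed:
  assumes "sorted_wrt (\<ge>) (bar mu)" "(i', j') \<in> shdiag mu"
    and "1 \<le> i" "i \<le> j" "i \<le> i'" "j \<le> j'"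
  shows "(i, j) \<in> shdiag mu"
proof -
  have "mu ! (i' - 1) + (i' - 1) \<le> mu ! (i - 1) + (i - 1)"
  proof (cases "i = i'")
    case False
    then have "bar mu ! (i' - 1) \<le> bar mu ! (i - 1)"
      using assms sorted_wrt_nth_less[OF assms(1), of "i - 1" "i' - 1"] by (auto simp: shdiag_iff)
    then show ?thesis
      using assms by (auto simp: shdiag_iff)
  qed simp
  then show ?thesis
    using assms by (auto simp: shdiag_iff)
qed

lemma finite_shdiag: "finite (shdiag l)"
proof (rule finite_subset)
  show "shdiag l \<subseteq> {1..length l} \<times> {..<length l + sum_list l}"
  proof (rule subrelI)
    fix i j assume ij: "(i, j) \<in> shdiag l"
    then have "l ! (i - 1) \<le> sum_list l"
      by (intro member_le_sum_list) (auto simp: shdiag_iff)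
    then show "(i, j) \<in> {1..length l} \<times> {..<length l + sum_list l}"
      using ij by (auto simp: shdiag_iff)
  qed
qed simp

lemma finite_skdiag: "finite (skdiag la mu)"
proof (rule finite_subset)
  show "skdiag la mu \<subseteq> {1..length la} \<times> {..sum_list la}"
  proof (rule subrelI)
    fix i j assume ij: "(i, j) \<in> skdiag la mu"
    then have "la ! (i - 1) \<le> sum_list la"
      by (intro member_le_sum_list) (auto simp: skdiag_iff)
    then show "(i, j) \<in> {1..length la} \<times> {..sum_list la}"
      using ij by (auto simp: skdiag_iff)
  qed
qed simp

section \<open>Gluing a tableau from an uncircled and a circled part\<close>

definition glue :: "nat list \<Rightarrow> nat list \<Rightarrow> (nat \<times> nat \<Rightarrow> letter) \<Rightarrow> (nat \<times> nat \<Rightarrow> nat) \<Rightarrow>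
    nat \<times> nat \<Rightarrow> letter" where
  "glue lam mu T1 T2 p =
     (if p \<in> shdiag mu then T1 p else if p \<in> shdiag lam then LCi (T2 p) else LUn 0)"

text \<open>There is no case with only the later cell in \<open>shdiag mu\<close>: that diagram is closed
  upwards and leftwards (\<open>shdiag_down_closed\<close>).\<close>

lemma glue_related:
  assumes sorted: "sorted_wrt (\<ge>) (bar mu)"
    and p: "(i, j) \<in> shdiag lam" and q: "(i', j') \<in> shdiag lam" and "i \<le> i'" "j \<le> j'"
    and inner: "(i, j) \<in> shdiag mu \<Longrightarrow> (i', j') \<in> shdiag mu \<Longrightarrow> R (T1 (i, j)) (T1 (i', j'))"
    and mixed: "(i, j) \<in> shdiag mu \<Longrightarrow> R (T1 (i, j)) (LCi (T2 (i', j')))"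
    and outer: "(i, j) \<notin> shdiag mu \<Longrightarrow> (i', j') \<notin> shdiag mu \<Longrightarrow>
                  R (LCi (T2 (i, j))) (LCi (T2 (i', j')))"
  shows "R (glue lam mu T1 T2 (i, j)) (glue lam mu T1 T2 (i', j'))"
proof (cases "(i', j') \<in> shdiag mu")
  case True
  moreover have "(i, j) \<in> shdiag mu"
    using shdiag_down_closed[OF sorted True] p \<open>i \<le> i'\<close> \<open>j \<le> j'\<close> by (auto simp: shdiag_iff)
  ultimately show ?thesis
    using inner by (simp add: glue_def)
next
  case False
  then show ?thesis
    using p q mixed outer by (auto simp: glue_def)
qed

lemma glue_marked_tableau:
  assumes len: "length mu = length lam" and le: "\<forall>i<length lam. mu ! i \<le> lam ! i"
    and sorted: "sorted_wrt (\<ge>) (bar mu)"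
    and T1: "marked_tableau mu (replicate (length mu) 0) n T1"
    and T2: "rs_tableau (bar lam) (bar mu) f T2"
  shows "marked_tableau lam f n (glue lam mu T1 T2)"
proof -
  have sub: "shdiag mu \<subseteq> shdiag lam"
    using shdiag_mono[OF len le] .
  have skew: "p \<in> skdiag (bar lam) (bar mu)" if "p \<in> shdiag lam" "p \<notin> shdiag mu" for p
    using that skdiag_bar_eq_Diff[OF len le] by blast
  have uncirc: "\<not> circled (T1 p)" if "p \<in> shdiag mu" for p
    using zero_flag_tableau_uncircled[OF T1 that] .
  show ?thesis
    unfolding marked_tableau_iff
  proof (intro conjI allI ballI impI)
    fix p assume "p \<notin> shdiag lam"
    then show "glue lam mu T1 T2 p = LUn 0"
      using sub by (auto simp: glue_def)
  next
    fix p assume p: "p \<in> shdiag lam"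
    show "letter_in_range n (glue lam mu T1 T2 p)"
    proof (cases "p \<in> shdiag mu")
      case True
      then show ?thesis
        using marked_tableau_range[OF T1 True] by (simp add: glue_def)
    next
      case False
      then show ?thesis
        using p rs_tableau_range[OF T2] skew by (cases p) (auto simp: glue_def)
    qed
  next
    fix i j j' assume "(i, j) \<in> shdiag lam \<and> (i, j') \<in> shdiag lam \<and> j < j'"
    then have p: "(i, j) \<in> shdiag lam" and q: "(i, j') \<in> shdiag lam" and "j < j'"
      by auto
    show "row_le (glue lam mu T1 T2 (i, j)) (glue lam mu T1 T2 (i, j'))"
    proof (rule glue_related[OF sorted p q])
      assume "(i, j) \<notin> shdiag mu" "(i, j') \<notin> shdiag mu"
      then show "row_le (LCi (T2 (i, j))) (LCi (T2 (i, j')))"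
        using rs_tableau_row[OF T2 skew[OF p] skew[OF q] \<open>j < j'\<close>] by simp
    qed (use \<open>j < j'\<close> marked_tableau_row[OF T1] row_le_LCi[OF uncirc] in auto)
  next
    fix i i' j assume "(i, j) \<in> shdiag lam \<and> (i', j) \<in> shdiag lam \<and> i < i'"
    then have p: "(i, j) \<in> shdiag lam" and q: "(i', j) \<in> shdiag lam" and "i < i'"
      by auto
    show "col_le (glue lam mu T1 T2 (i, j)) (glue lam mu T1 T2 (i', j))"
    proof (rule glue_related[OF sorted p q])
      assume "(i, j) \<notin> shdiag mu" "(i', j) \<notin> shdiag mu"
      then show "col_le (LCi (T2 (i, j))) (LCi (T2 (i', j)))"
        using rs_tableau_col[OF T2 skew[OF p] skew[OF q] \<open>i < i'\<close>] by simp
    qed (use \<open>i < i'\<close> marked_tableau_col[OF T1] col_le_LCi[OF uncirc] in auto)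
  next
    fix i j assume p: "(i, j) \<in> shdiag lam"
    show "lle (glue lam mu T1 T2 (i, j)) (LCi (f ! (i - 1)))"
    proof (cases "(i, j) \<in> shdiag mu")
      case False
      then show ?thesis
        using rs_tableau_range[OF T2 skew[OF p False]] p by (simp add: glue_def lle_LCi_iff)
    qed (simp add: glue_def lle_LCi_iff uncirc)
  qed
qed

section \<open>The uncircled part of a marked shifted tableau\<close>

definition uncircled_length :: "(nat \<times> nat \<Rightarrow> letter) \<Rightarrow> nat \<Rightarrow> nat \<Rightarrow> nat" where
  "uncircled_length T i L = (LEAST k. L \<le> k \<or> circled (T (i, i + k)))"

definition uncircled_shape :: "nat list \<Rightarrow> (nat \<times> nat \<Rightarrow> letter) \<Rightarrow> nat list" where
  "uncircled_shape lam T = map (\<lambda>i. uncircled_length T (Suc i) (lam ! i)) [0..<length lam]"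

lemma length_uncircled_shape [simp]: "length (uncircled_shape lam T) = length lam"
  by (simp add: uncircled_shape_def)

lemma nth_uncircled_shape: "i < length lam \<Longrightarrow> uncircled_shape lam T ! i = uncircled_length T (Suc i) (lam ! i)"
  by (simp add: uncircled_shape_def)

lemma uncircled_shape_le: "\<forall>i<length lam. uncircled_shape lam T ! i \<le> lam ! i"
  by (auto simp: nth_uncircled_shape uncircled_length_def intro: Least_le)

text \<open>Circled letters exceed all others, so along a row of a marked tableau they form a final segment.\<close>

lemma circled_iff_uncircled_length_le:
  assumes T: "marked_tableau lam f n T" and "(i, i + k) \<in> shdiag lam"
  shows "circled (T (i, i + k)) \<longleftrightarrow> uncircled_length T i (lam ! (i - 1)) \<le> k"
proof
  assume "circled (T (i, i + k))"
  then show "uncircled_length T i (lam ! (i - 1)) \<le> k"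
    unfolding uncircled_length_def by (intro Least_le) simp
next
  define c where "c = uncircled_length T i (lam ! (i - 1))"
  assume "c \<le> k"
  have "lam ! (i - 1) \<le> c \<or> circled (T (i, i + c))"
    unfolding c_def uncircled_length_def by (rule LeastI[of _ "lam ! (i - 1)"]) simp
  then have "circled (T (i, i + c))"
    using \<open>c \<le> k\<close> assms(2) by (auto simp: shdiag_iff)
  moreover have "c = k \<or> lle (T (i, i + c)) (T (i, i + k))"
  proof (cases "c = k")
    case False
    then show ?thesis
      using \<open>c \<le> k\<close> assms(2) marked_tableau_row[OF T, of i "i + c" "i + k"]
      by (auto simp: shdiag_iff row_le_def)
  qed simp
  ultimately show "circled (T (i, i + k))"
    using lle_circled by auto
qed

lemma shdiag_uncircled_shape_iff:
  assumes T: "marked_tableau lam f n T" and p: "(i, j) \<in> shdiag lam"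
  shows "(i, j) \<in> shdiag (uncircled_shape lam T) \<longleftrightarrow> \<not> circled (T (i, j))"
proof -
  have ij: "1 \<le> i" "i \<le> length lam" "i \<le> j"
    using p by (auto simp: shdiag_iff)
  then have "(i, i + (j - i)) \<in> shdiag lam"
    using p by simp
  from circled_iff_uncircled_length_le[OF T this] ij show ?thesis
    by (auto simp: shdiag_iff nth_uncircled_shape)
qed

lemma strict_partition_nth_less: "strict_partition lam \<Longrightarrow> Suc a < length lam \<Longrightarrow> lam ! Suc a < lam ! a"
  unfolding strict_partition_def sorted_wrt_iff_nth_less by auto

lemma strict_partition_nth_pos: "strict_partition lam \<Longrightarrow> a < length lam \<Longrightarrow> 0 < lam ! a"
  unfolding strict_partition_def by auto

lemma uncircled_shape_Suc_less:
  assumes T: "marked_tableau lam f n T" and lam: "strict_partition lam" and a: "Suc a < length lam"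
    and pos: "0 < uncircled_shape lam T ! Suc a"
  shows "uncircled_shape lam T ! Suc a < uncircled_shape lam T ! a"
proof -
  define mu where "mu = uncircled_shape lam T"
  define j where "j = Suc a + mu ! Suc a"
  have "mu ! Suc a \<le> lam ! Suc a"
    using uncircled_shape_le a unfolding mu_def by blast
  then have lower: "(Suc (Suc a), j) \<in> shdiag lam" and upper: "(Suc a, j) \<in> shdiag lam"
    using a pos strict_partition_nth_less[OF lam a] unfolding j_def mu_def by (auto simp: shdiag_iff)
  have "(Suc (Suc a), j) \<in> shdiag mu"
    using a pos unfolding j_def mu_def by (auto simp: shdiag_iff)
  then have "\<not> circled (T (Suc (Suc a), j))"
    using shdiag_uncircled_shape_iff[OF T lower] unfolding mu_def by simp
  then have "\<not> circled (T (Suc a, j))"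
    using marked_tableau_col[OF T upper lower] lle_circled by (auto simp: col_le_def)
  then have "(Suc a, j) \<in> shdiag mu"
    using shdiag_uncircled_shape_iff[OF T upper] unfolding mu_def by simp
  then show ?thesis
    unfolding j_def mu_def by (auto simp: shdiag_iff)
qed

lemma uncircled_shape_Suc_zero:
  assumes T: "marked_tableau lam f n T" and lam: "strict_partition lam" and a: "Suc a < length lam"
    and zero: "uncircled_shape lam T ! a = 0"
  shows "uncircled_shape lam T ! Suc a = 0"
proof -
  define mu where "mu = uncircled_shape lam T"
  have upper: "(Suc a, Suc (Suc a)) \<in> shdiag lam" and lower: "(Suc (Suc a), Suc (Suc a)) \<in> shdiag lam"
    using a strict_partition_nth_less[OF lam a] strict_partition_nth_pos[OF lam a]
    by (auto simp: shdiag_iff)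
  have "(Suc a, Suc (Suc a)) \<notin> shdiag mu"
    using zero unfolding mu_def by (auto simp: shdiag_iff)
  then have "circled (T (Suc a, Suc (Suc a)))"
    using shdiag_uncircled_shape_iff[OF T upper] unfolding mu_def by simp
  then have "circled (T (Suc (Suc a), Suc (Suc a)))"
    using marked_tableau_col[OF T upper lower] lle_circled by (auto simp: col_le_def)
  then have "(Suc (Suc a), Suc (Suc a)) \<notin> shdiag mu"
    using shdiag_uncircled_shape_iff[OF T lower] unfolding mu_def by simp
  then show ?thesis
    using a unfolding mu_def by (auto simp: shdiag_iff)
qed

text \<open>A row consisting of circled letters only is strictly increasing from at least 1
  and bounded by its flag, so it is no longer than the flag.\<close>

lemma uncircled_shape_zero_imp_le_flag:
  assumes T: "marked_tableau lam f n T" and lam: "strict_partition lam" and a: "a < length lam"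
    and zero: "uncircled_shape lam T ! a = 0"
  shows "lam ! a \<le> f ! a"
proof -
  define i where "i = Suc a"
  have cell: "(i, i + k) \<in> shdiag lam" if "k < lam ! a" for k
    using a that unfolding i_def by (auto simp: shdiag_iff)
  have circ: "T (i, i + k) = LCi (circ_index (T (i, i + k)))" if "k < lam ! a" for k
  proof -
    have "(i, i + k) \<notin> shdiag (uncircled_shape lam T)"
      using zero unfolding i_def by (auto simp: shdiag_iff)
    then show ?thesis
      using shdiag_uncircled_shape_iff[OF T cell[OF that]] circled_iff by blast
  qed
  have grow: "k < lam ! a \<Longrightarrow> k < circ_index (T (i, i + k))" for k
  proof (induction k)
    case 0
    then show ?case
      using marked_tableau_range[OF T cell[OF 0]] circ[OF 0] by (cases "T (i, i + 0)") auto
  next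
    case (Suc k)
    then have "row_le (T (i, i + k)) (T (i, i + Suc k))"
      using marked_tableau_row[OF T cell[of k] cell[OF Suc.prems]] by simp
    then have "circ_index (T (i, i + k)) < circ_index (T (i, i + Suc k))"
      using circ[of k] circ[OF Suc.prems] Suc.prems by (metis Suc_lessD row_le_LCi_iff)
    then show ?case
      using Suc by simp
  qed
  have last: "lam ! a - 1 < lam ! a"
    using strict_partition_nth_pos[OF lam a] by simp
  have "lle (T (i, i + (lam ! a - 1))) (LCi (f ! a))"
    using marked_tableau_flag[OF T cell[OF last]] unfolding i_def by simp
  then have "circ_index (T (i, i + (lam ! a - 1))) \<le> f ! a"
    using circ[OF last] by (metis lle_LCi_iff circled.simps(1) circ_index.simps(1))
  then show ?thesis
    using grow[OF last] by linarith
qed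

lemma uncircled_shape_pos:
  assumes T: "marked_tableau lam f n T" and lam: "strict_partition lam"
    and flags: "2 \<le> length lam \<longrightarrow>
           f ! (length lam - 2) < lam ! (length lam - 2) \<or> f ! (length lam - 1) < lam ! (length lam - 1)"
    and a: "Suc a < length lam"
  shows "0 < uncircled_shape lam T ! a"
proof (rule ccontr)
  assume "\<not> 0 < uncircled_shape lam T ! a"
  then have "uncircled_shape lam T ! a = 0"
    by simp
  have zero: "b < length lam \<Longrightarrow> uncircled_shape lam T ! b = 0" if "a \<le> b" for b
    using that
  proof (induction b rule: dec_induct)
    case (step b)
    then show ?case
      using uncircled_shape_Suc_zero[OF T lam] by simp
  qed (use \<open>uncircled_shape lam T ! a = 0\<close> in simp)
  have "lam ! (length lam - 2) \<le> f ! (length lam - 2)" "lam ! (length lam - 1) \<le> f ! (length lam - 1)"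
    using a by (auto intro!: uncircled_shape_zero_imp_le_flag[OF T lam] zero)
  then show False
    using flags a by auto
qed

lemma uncircled_shape_decreasing:
  assumes T: "marked_tableau lam f n T" and lam: "strict_partition lam"
    and flags: "2 \<le> length lam \<longrightarrow>
           f ! (length lam - 2) < lam ! (length lam - 2) \<or> f ! (length lam - 1) < lam ! (length lam - 1)"
    and a: "Suc a < length lam"
  shows "uncircled_shape lam T ! Suc a < uncircled_shape lam T ! a"
  using uncircled_shape_Suc_less[OF T lam a] uncircled_shape_pos[OF T lam flags a]
  by (cases "uncircled_shape lam T ! Suc a") auto

lemma decreasing_imp_sorted_bar:
  fixes l :: "nat list"
  assumes "\<forall>a. Suc a < length l \<longrightarrow> l ! Suc a < l ! a"
  shows "sorted_wrt (>) l" and "sorted_wrt (\<ge>) (bar l)"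
  using assms by (auto simp: sorted_wrt_iff_nth_Suc_transp)

lemma strictly_decreasing_split_zeros:
  "sorted_wrt (>) (mu :: nat list) \<Longrightarrow> \<exists>nu k. mu = nu @ replicate k 0 \<and> strict_partition nu"
proof (induction mu)
  case Nil
  then show ?case
    by (intro exI[of _ "[]"] exI[of _ 0]) (simp add: strict_partition_def)
next
  case (Cons m mu)
  show ?case
  proof (cases "m = 0")
    case True
    with Cons.prems have "mu = []"
      by (cases mu) auto
    with True show ?thesis
      by (intro exI[of _ "[]"] exI[of _ 1]) (simp add: strict_partition_def)
  next
    case False
    from Cons obtain nu k where "mu = nu @ replicate k 0" "strict_partition nu"
      by auto
    with Cons.prems False show ?thesis
      by (intro exI[of _ "m # nu"] exI[of _ k]) (auto simp: strict_partition_def)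
  qed
qed

definition admissible_shapes :: "nat list \<Rightarrow> nat list set" where
  "admissible_shapes lam = {mu. length mu = length lam \<and>
     (\<exists>nu k. mu = nu @ replicate k 0 \<and> strict_partition nu) \<and>
     (\<forall>i<length lam. mu ! i \<le> lam ! i) \<and> sorted_wrt (\<ge>) (bar mu)}"

lemma uncircled_shape_admissible:
  assumes T: "marked_tableau lam f n T" and lam: "strict_partition lam"
    and flags: "2 \<le> length lam \<longrightarrow>
           f ! (length lam - 2) < lam ! (length lam - 2) \<or> f ! (length lam - 1) < lam ! (length lam - 1)"
  shows "uncircled_shape lam T \<in> admissible_shapes lam"
proof -
  have "\<forall>a. Suc a < length (uncircled_shape lam T) \<longrightarrow>
      uncircled_shape lam T ! Suc a < uncircled_shape lam T ! a"
    using uncircled_shape_decreasing[OF T lam flags] by simp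
  from decreasing_imp_sorted_bar[OF this] show ?thesis
    using strictly_decreasing_split_zeros uncircled_shape_le by (auto simp: admissible_shapes_def)
qed

section \<open>Splitting a marked shifted tableau\<close>

definition inner_part :: "nat list \<Rightarrow> (nat \<times> nat \<Rightarrow> letter) \<Rightarrow> nat \<times> nat \<Rightarrow> letter" where
  "inner_part mu T p = (if p \<in> shdiag mu then T p else LUn 0)"

definition outer_part :: "nat list \<Rightarrow> nat list \<Rightarrow> (nat \<times> nat \<Rightarrow> letter) \<Rightarrow> nat \<times> nat \<Rightarrow> nat" where
  "outer_part lam mu T p = (if p \<in> skdiag (bar lam) (bar mu) then circ_index (T p) else 0)"

lemma inner_part_marked_tableau:
  assumes T: "marked_tableau lam f n T"
  defines "mu \<equiv> uncircled_shape lam T"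
  shows "marked_tableau mu (replicate (length mu) 0) n (inner_part mu T)"
proof -
  have sub: "shdiag mu \<subseteq> shdiag lam"
    unfolding mu_def by (rule shdiag_mono) (simp_all add: uncircled_shape_le)
  show ?thesis
    unfolding marked_tableau_iff
  proof (intro conjI allI ballI impI)
    fix i j assume p: "(i, j) \<in> shdiag mu"
    then have "\<not> circled (T (i, j))"
      using shdiag_uncircled_shape_iff[OF T] sub unfolding mu_def by blast
    then show "lle (inner_part mu T (i, j)) (LCi (replicate (length mu) 0 ! (i - 1)))"
      using p by (simp add: inner_part_def lle_LCi_iff)
  next
    fix i j j' assume "(i, j) \<in> shdiag mu \<and> (i, j') \<in> shdiag mu \<and> j < j'"
    then show "row_le (inner_part mu T (i, j)) (inner_part mu T (i, j'))"
      using sub marked_tableau_row[OF T, of i j j'] by (auto simp: inner_part_def)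
  next
    fix i i' j assume "(i, j) \<in> shdiag mu \<and> (i', j) \<in> shdiag mu \<and> i < i'"
    then show "col_le (inner_part mu T (i, j)) (inner_part mu T (i', j))"
      using sub marked_tableau_col[OF T, of i j i'] by (auto simp: inner_part_def)
  qed (use sub marked_tableau_range[OF T] in \<open>auto simp: inner_part_def\<close>)
qed

lemma outer_part_rs_tableau:
  assumes T: "marked_tableau lam f n T"
  defines "mu \<equiv> uncircled_shape lam T"
  shows "rs_tableau (bar lam) (bar mu) f (outer_part lam mu T)"
proof -
  have skew: "skdiag (bar lam) (bar mu) = shdiag lam - shdiag mu"
    unfolding mu_def by (rule skdiag_bar_eq_Diff) (simp_all add: uncircled_shape_le)
  have circ: "T p = LCi (outer_part lam mu T p)" if "p \<in> skdiag (bar lam) (bar mu)" for p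
    using that skew shdiag_uncircled_shape_iff[OF T] circled_iff unfolding mu_def outer_part_def
    by (cases p) auto
  have range: "1 \<le> outer_part lam mu T (i, j) \<and> outer_part lam mu T (i, j) \<le> f ! (i - 1)"
    if p: "(i, j) \<in> skdiag (bar lam) (bar mu)" for i j
  proof -
    have "(i, j) \<in> shdiag lam"
      using p skew by blast
    then show ?thesis
      using marked_tableau_range[OF T] marked_tableau_flag[OF T] circ[OF p]
      by (metis letter_in_range.simps(3) lle_LCi_iff circled.simps(1) circ_index.simps(1))
  qed
  have row: "outer_part lam mu T (i, j) < outer_part lam mu T (i, j')"
    if "(i, j) \<in> skdiag (bar lam) (bar mu)" "(i, j') \<in> skdiag (bar lam) (bar mu)" "j < j'" for i j j'
    using that marked_tableau_row[OF T, of i j j'] circ skew by (metis DiffD1 row_le_LCi_iff)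
  have col: "outer_part lam mu T (i, j) \<le> outer_part lam mu T (i', j)"
    if "(i, j) \<in> skdiag (bar lam) (bar mu)" "(i', j) \<in> skdiag (bar lam) (bar mu)" "i < i'" for i i' j
    using that marked_tableau_col[OF T, of i j i'] circ skew by (metis DiffD1 col_le_LCi_iff)
  show ?thesis
    unfolding rs_tableau_def using range row col by (auto simp: outer_part_def)
qed

lemma glue_parts:
  assumes T: "marked_tableau lam f n T"
  defines "mu \<equiv> uncircled_shape lam T"
  shows "glue lam mu (inner_part mu T) (outer_part lam mu T) = T"
proof
  fix p
  have skew: "skdiag (bar lam) (bar mu) = shdiag lam - shdiag mu"
    unfolding mu_def by (rule skdiag_bar_eq_Diff) (simp_all add: uncircled_shape_le)
  show "glue lam mu (inner_part mu T) (outer_part lam mu T) p = T p"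
  proof (cases "p \<in> shdiag lam - shdiag mu")
    case True
    then have "circled (T p)"
      using shdiag_uncircled_shape_iff[OF T] unfolding mu_def by (cases p) auto
    with True show ?thesis
      using skew circled_iff by (auto simp: glue_def outer_part_def)
  next
    case False
    then show ?thesis
      using marked_tableau_outside[OF T] by (auto simp: glue_def inner_part_def)
  qed
qed

lemma uncircled_shape_glue:
  assumes len: "length mu = length lam" and le: "\<forall>i<length lam. mu ! i \<le> lam ! i"
    and T1: "marked_tableau mu (replicate (length mu) 0) n T1"
  shows "uncircled_shape lam (glue lam mu T1 T2) = mu"
proof (rule nth_equalityI)
  fix i assume "i < length (uncircled_shape lam (glue lam mu T1 T2))"
  then have i: "i < length lam"
    by simp
  have "uncircled_length (glue lam mu T1 T2) (Suc i) (lam ! i) = mu ! i"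
    unfolding uncircled_length_def
  proof (rule Least_equality)
    show "lam ! i \<le> mu ! i \<or> circled (glue lam mu T1 T2 (Suc i, Suc i + mu ! i))"
      using i by (auto simp: glue_def shdiag_iff)
  next
    fix k assume k: "lam ! i \<le> k \<or> circled (glue lam mu T1 T2 (Suc i, Suc i + k))"
    show "mu ! i \<le> k"
    proof (rule ccontr)
      assume "\<not> mu ! i \<le> k"
      then have "(Suc i, Suc i + k) \<in> shdiag mu"
        using i len by (auto simp: shdiag_iff)
      then show False
        using k zero_flag_tableau_uncircled[OF T1] \<open>\<not> mu ! i \<le> k\<close> le i
        by (auto simp: glue_def)
    qed
  qed
  then show "uncircled_shape lam (glue lam mu T1 T2) ! i = mu ! i"
    using i by (simp add: nth_uncircled_shape)
qed (simp add: len)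

lemma inner_part_glue:
  assumes "marked_tableau mu (replicate (length mu) 0) n T1"
  shows "inner_part mu (glue lam mu T1 T2) = T1"
  using marked_tableau_outside[OF assms] by (auto simp: inner_part_def glue_def)

lemma outer_part_glue:
  assumes len: "length mu = length lam" and le: "\<forall>i<length lam. mu ! i \<le> lam ! i"
    and T2: "rs_tableau (bar lam) (bar mu) f T2"
  shows "outer_part lam mu (glue lam mu T1 T2) = T2"
  using rs_tableau_outside[OF T2] skdiag_bar_eq_Diff[OF len le]
  by (auto simp: outer_part_def glue_def)

definition split_tableau ::
    "nat list \<Rightarrow> (nat \<times> nat \<Rightarrow> letter) \<Rightarrow> nat list \<times> (nat \<times> nat \<Rightarrow> letter) \<times> (nat \<times> nat \<Rightarrow> nat)" where
  "split_tableau lam T = (let mu = uncircled_shape lam T in (mu, inner_part mu T, outer_part lam mu T))"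

definition split_tableaux ::
    "nat list \<Rightarrow> nat list \<Rightarrow> nat \<Rightarrow> (nat list \<times> (nat \<times> nat \<Rightarrow> letter) \<times> (nat \<times> nat \<Rightarrow> nat)) set" where
  "split_tableaux lam f n =
     (SIGMA mu:admissible_shapes lam. {T1. marked_tableau mu (replicate (length mu) 0) n T1} \<times>
                                      {T2. rs_tableau (bar lam) (bar mu) f T2})"

lemma bij_betw_glue:
  assumes lam: "strict_partition lam"
    and flags: "2 \<le> length lam \<longrightarrow>
           f ! (length lam - 2) < lam ! (length lam - 2) \<or> f ! (length lam - 1) < lam ! (length lam - 1)"
  shows "bij_betw (\<lambda>(mu, T1, T2). glue lam mu T1 T2) (split_tableaux lam f n) {T. marked_tableau lam f n T}"
proof (rule bij_betw_byWitness[where f' = "split_tableau lam"])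
  have shape: "length mu = length lam" "\<forall>i<length lam. mu ! i \<le> lam ! i" "sorted_wrt (\<ge>) (bar mu)"
    if "mu \<in> admissible_shapes lam" for mu
    using that by (auto simp: admissible_shapes_def)
  show "\<forall>s\<in>split_tableaux lam f n. split_tableau lam ((\<lambda>(mu, T1, T2). glue lam mu T1 T2) s) = s"
    using uncircled_shape_glue[OF shape(1,2)] inner_part_glue outer_part_glue[OF shape(1,2)]
    by (auto simp: split_tableaux_def split_tableau_def)
  show "\<forall>T\<in>{T. marked_tableau lam f n T}. (\<lambda>(mu, T1, T2). glue lam mu T1 T2) (split_tableau lam T) = T"
    using glue_parts by (simp add: split_tableau_def Let_def)
  show "(\<lambda>(mu, T1, T2). glue lam mu T1 T2) ` split_tableaux lam f n \<subseteq> {T. marked_tableau lam f n T}"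
    using glue_marked_tableau[OF shape] by (auto simp: split_tableaux_def)
  show "split_tableau lam ` {T. marked_tableau lam f n T} \<subseteq> split_tableaux lam f n"
    using uncircled_shape_admissible[OF _ lam flags] inner_part_marked_tableau outer_part_rs_tableau
    by (auto simp: split_tableaux_def split_tableau_def Let_def)
qed

lemma finite_zero_flag_tableaux: "finite {T. marked_tableau mu (replicate (length mu) 0) n T}"
proof (rule finite_subset)
  let ?V = "LPr ` {..n} \<union> LUn ` {..n}"
  have "T p \<in> ?V" if "marked_tableau mu (replicate (length mu) 0) n T" "p \<in> shdiag mu" for T p
    using marked_tableau_range[OF that] zero_flag_tableau_uncircled[OF that] by (cases "T p") auto
  then show "{T. marked_tableau mu (replicate (length mu) 0) n T} \<subseteq>
      {T. \<forall>p. (p \<in> shdiag mu \<longrightarrow> T p \<in> ?V) \<and> (p \<notin> shdiag mu \<longrightarrow> T p = LUn 0)}"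
    using marked_tableau_outside by blast
  show "finite {T. \<forall>p. (p \<in> shdiag mu \<longrightarrow> T p \<in> ?V) \<and> (p \<notin> shdiag mu \<longrightarrow> T p = LUn 0)}"
    by (rule finite_set_of_finite_funs) (simp_all add: finite_shdiag)
qed

lemma finite_rs_tableaux:
  assumes "length f = length la"
  shows "finite {T. rs_tableau la mu f T}"
proof (rule finite_subset)
  have "T (i, j) \<le> sum_list f" if "rs_tableau la mu f T" "(i, j) \<in> skdiag la mu" for T i j
  proof -
    have "f ! (i - 1) \<le> sum_list f"
      using that(2) assms by (intro member_le_sum_list) (auto simp: skdiag_iff)
    then show ?thesis
      using rs_tableau_range[OF that] by linarith
  qed
  then show "{T. rs_tableau la mu f T} \<subseteq>
      {T. \<forall>p. (p \<in> skdiag la mu \<longrightarrow> T p \<in> {..sum_list f}) \<and> (p \<notin> skdiag la mu \<longrightarrow> T p = 0)}"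
    using rs_tableau_outside by fastforce
  show "finite {T. \<forall>p. (p \<in> skdiag la mu \<longrightarrow> T p \<in> {..sum_list f}) \<and> (p \<notin> skdiag la mu \<longrightarrow> T p = 0)}"
    by (rule finite_set_of_finite_funs) (simp_all add: finite_skdiag)
qed

lemma finite_admissible_shapes: "finite (admissible_shapes lam)"
proof (rule finite_subset)
  have bound: "mu ! i \<le> sum_list lam" if "mu \<in> admissible_shapes lam" "i < length mu" for mu i
  proof -
    have "lam ! i \<le> sum_list lam"
      using that by (intro member_le_sum_list) (auto simp: admissible_shapes_def)
    then show ?thesis
      using that by (auto simp: admissible_shapes_def)
  qed
  show "admissible_shapes lam \<subseteq> {mu. set mu \<subseteq> {..sum_list lam} \<and> length mu = length lam}"
  proof
    fix mu assume mu: "mu \<in> admissible_shapes lam"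
    then have "set mu \<subseteq> {..sum_list lam}"
      using bound by (auto simp: in_set_conv_nth)
    with mu show "mu \<in> {mu. set mu \<subseteq> {..sum_list lam} \<and> length mu = length lam}"
      by (simp add: admissible_shapes_def)
  qed
  show "finite {mu. set mu \<subseteq> {..sum_list lam} \<and> length mu = length lam}"
    by (rule finite_lists_length_eq) simp
qed

lemma tableau_weight_glue:
  assumes len: "length mu = length lam" and le: "\<forall>i<length lam. mu ! i \<le> lam ! i"
    and T1: "marked_tableau mu (replicate (length mu) 0) n T1"
  shows "(\<Prod>p\<in>shdiag lam. lweight x z B (fst p) (snd p) (glue lam mu T1 T2 p)) =
    (\<Prod>p\<in>shdiag mu. lweight x (\<lambda>_. 0) B (fst p) (snd p) (T1 p)) *
    (\<Prod>p\<in>skdiag (bar lam) (bar mu). z (T2 p) + B (int (T2 p) + int (fst p) - int (snd p)))"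
    (is "_ = ?rhs")
proof -
  have skew: "skdiag (bar lam) (bar mu) = shdiag lam - shdiag mu"
    using skdiag_bar_eq_Diff[OF len le] .
  have split: "shdiag lam = shdiag mu \<union> skdiag (bar lam) (bar mu)"
    using skew shdiag_mono[OF len le] by blast
  have inner: "lweight x z B (fst p) (snd p) (glue lam mu T1 T2 p) = lweight x (\<lambda>_. 0) B (fst p) (snd p) (T1 p)"
    if "p \<in> shdiag mu" for p
    using that zero_flag_tableau_uncircled[OF T1 that] by (cases "T1 p") (auto simp: glue_def)
  have outer: "lweight x z B (fst p) (snd p) (glue lam mu T1 T2 p) = z (T2 p) + B (int (T2 p) + int (fst p) - int (snd p))"
    if "p \<in> skdiag (bar lam) (bar mu)" for p
    using that skew by (auto simp: glue_def)
  have "(\<Prod>p\<in>shdiag lam. lweight x z B (fst p) (snd p) (glue lam mu T1 T2 p)) =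
      (\<Prod>p\<in>shdiag mu. lweight x z B (fst p) (snd p) (glue lam mu T1 T2 p)) *
      (\<Prod>p\<in>skdiag (bar lam) (bar mu). lweight x z B (fst p) (snd p) (glue lam mu T1 T2 p))"
    unfolding split by (rule prod.union_disjoint) (use skew in \<open>auto simp: finite_shdiag finite_skdiag\<close>)
  also have "\<dots> = ?rhs"
    by (intro arg_cong2[where f = "(*)"] prod.cong) (simp_all add: inner outer)
  finally show ?thesis .
qed

lemma sum_SIGMA_product:
  fixes g :: "'i \<Rightarrow> 'a \<Rightarrow> 'c::comm_semiring_0" and h :: "'i \<Rightarrow> 'b \<Rightarrow> 'c"
  assumes "finite I" "\<And>i. i \<in> I \<Longrightarrow> finite (A i)" "\<And>i. i \<in> I \<Longrightarrow> finite (B i)"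
  shows "(\<Sum>(i, a, b)\<in>(SIGMA i:I. A i \<times> B i). g i a * h i b) = (\<Sum>i\<in>I. sum (g i) (A i) * sum (h i) (B i))"
proof -
  have "(\<Sum>(i, a, b)\<in>(SIGMA i:I. A i \<times> B i). g i a * h i b) = (\<Sum>i\<in>I. \<Sum>(a, b)\<in>A i \<times> B i. g i a * h i b)"
    using assms by (subst sum.Sigma) (auto simp: case_prod_beta')
  also have "\<dots> = (\<Sum>i\<in>I. sum (g i) (A i) * sum (h i) (B i))"
    by (simp add: sum_product sum.cartesian_product)
  finally show ?thesis .
qed

theorem mainTheorem3:
  fixes lam f :: "nat list" and n :: nat
    and x z :: "nat \<Rightarrow> 'a::comm_ring_1" and b :: "int \<Rightarrow> 'a"
  assumes "strict_partition lam"
    and "length f = length lam"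
    and "2 \<le> length lam \<longrightarrow>
           f ! (length lam - 2) < lam ! (length lam - 2) \<or> f ! (length lam - 1) < lam ! (length lam - 1)"
  shows "Qlf lam f n x z b =
    (\<Sum>mu\<in>{mu. length mu = length lam \<and>
              (\<exists>nu k. mu = nu @ replicate k 0 \<and> strict_partition nu) \<and>
              (\<forall>i<length lam. mu ! i \<le> lam ! i) \<and>
              sorted_wrt (\<ge>) (bar mu)}.
       Qfac mu n x b * sTilde (bar lam) (bar mu) f z (bext b))"
proof -
  let ?w = "\<lambda>T. \<Prod>p\<in>shdiag lam. lweight x z (bext b) (fst p) (snd p) (T p)"
  let ?w1 = "\<lambda>mu T1. \<Prod>p\<in>shdiag mu. lweight x (\<lambda>_. 0) (bext b) (fst p) (snd p) (T1 p)"
  let ?w2 = "\<lambda>mu T2. \<Prod>p\<in>skdiag (bar lam) (bar mu).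
      z (T2 p) + bext b (int (T2 p) + int (fst p) - int (snd p))"
  have "Qlf lam f n x z b = (\<Sum>(mu, T1, T2)\<in>split_tableaux lam f n. ?w (glue lam mu T1 T2))"
    unfolding Qlf_def sum.reindex_bij_betw[OF bij_betw_glue[OF assms(1,3)], symmetric]
    by (simp add: case_prod_beta')
  also have "\<dots> = (\<Sum>(mu, T1, T2)\<in>split_tableaux lam f n. ?w1 mu T1 * ?w2 mu T2)"
    by (intro sum.cong) (auto simp: split_tableaux_def admissible_shapes_def tableau_weight_glue)
  also have "\<dots> = (\<Sum>mu\<in>admissible_shapes lam. Qfac mu n x b * sTilde (bar lam) (bar mu) f z (bext b))"
    unfolding split_tableaux_def
    by (subst sum_SIGMA_product)
       (simp_all add: finite_admissible_shapes finite_zero_flag_tableaux finite_rs_tableaux assms(2)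
         Qfac_def Qlf_def sTilde_def)
  finally show ?thesis
    unfolding admissible_shapes_def .
qed

end
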